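(* Consider the $2$-user symmetric linear deterministic Z interference channel with unidirectional, rate-limited transmitter cooperation of capacity $C$ (any nonnegative integer) from transmitter $2$ to transmitter $1$, with integer parameters $m\ge1$, $n\ge0$, and suppose $\alpha\ge 2$, where $\alpha=n/m$. Then the secrecy capacity region (under the perfect secrecy constraint) is the set of all $(R_1,R_2)$ with $0\le R_1\le m$ and $R_2=0$.
   Context: Model: let $q=\max\{m,n\}$ and let $\mathbf{D}$ be the $q\times q$ downshift matrix over $\mathbb{F}_2$ (entries $d_{j',j''}=1$ if $2\le j'=j''+1\le q$, and $0$ otherwise). At each channel use, transmitter $i$ sends $\mathbf{x}_i\in\mathbb{F}_2^q$, and the outputs are $\mathbf{y}_1=\mathbf{D}^{q-m}\mathbf{x}_1\oplus\mathbf{D}^{q-n}\mathbf{x}_2$ and $\mathbf{y}_2=\mathbf{D}^{q-m}\mathbf{x}_2$, where $\oplus$ is componentwise addition mod $2$. Transmitter $i$ has a message $W_i$ uniform on $\{1,\dots,2^{NR_i}\}$ ($N$ = block length, rates in bits per channel use). Transmitter $2$ can send to transmitter $1$, over a noiseless secure link, at most $C$ bits per channel use; transmitter $2$'s signal depends only on $W_2$ (and possibly its own randomness), while transmitter $1$'s signal at each time is a function of $W_1$, the bits received so far over the cooperative link (causality), and possibly locally generated random bits. Receiver $i$ decodes $W_i$ from $\mathbf{y}_i^N$. A rate pair is achievable with perfect secrecy if there are such codes with decoding error probability tending to $0$ as $N\to\infty$ and $I(W_i;\mathbf{y}_j^N)=0$ for $i\neq j$. The secrecy capacity region is the closure of the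 set of achievable rate pairs. *)

theory Defs
  imports "HOL-Analysis.Analysis" "HOL-Probability.Probability_Mass_Function" "HOL-Library.Z2"
begin

text \<open>Vectors over F_2 of length q are functions nat => bit, coordinates 1..q
  (coordinates outside 1..q are ignored by all matrix operations below).
  q x q matrices over F_2 are functions nat => nat => bit, indices 1..q.\<close>

definition downshift :: "nat \<Rightarrow> nat \<Rightarrow> nat \<Rightarrow> bit" where
  "downshift q j' j'' = (if 2 \<le> j' \<and> j' = j'' + 1 \<and> j' \<le> q then 1 else 0)"

definition mat_id :: "nat \<Rightarrow> nat \<Rightarrow> bit" where
  "mat_id i j = (if i = j then 1 else 0)"

definition mat_mult :: "nat \<Rightarrow> (nat \<Rightarrow> nat \<Rightarrow> bit) \<Rightarrow> (nat \<Rightarrow> nat \<Rightarrow> bit) \<Rightarrow> nat \<Rightarrow> nat \<Rightarrow> bit" where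
  "mat_mult q A B i k = (\<Sum>j\<in>{1..q}. A i j * B j k)"

fun mat_pow :: "nat \<Rightarrow> (nat \<Rightarrow> nat \<Rightarrow> bit) \<Rightarrow> nat \<Rightarrow> nat \<Rightarrow> nat \<Rightarrow> bit" where
  "mat_pow q A 0 = mat_id"
| "mat_pow q A (Suc k) = mat_mult q A (mat_pow q A k)"

definition mat_vec :: "nat \<Rightarrow> (nat \<Rightarrow> nat \<Rightarrow> bit) \<Rightarrow> (nat \<Rightarrow> bit) \<Rightarrow> nat \<Rightarrow> bit" where
  "mat_vec q A x i = (\<Sum>j\<in>{1..q}. A i j * x j)"

definition out1 :: "nat \<Rightarrow> nat \<Rightarrow> (nat \<Rightarrow> bit) \<Rightarrow> (nat \<Rightarrow> bit) \<Rightarrow> nat \<Rightarrow> bit" where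
  "out1 m n x1 x2 = (let q = max m n in
     (\<lambda>i. mat_vec q (mat_pow q (downshift q) (q - m)) x1 i
        + mat_vec q (mat_pow q (downshift q) (q - n)) x2 i))"

definition out2 :: "nat \<Rightarrow> nat \<Rightarrow> (nat \<Rightarrow> bit) \<Rightarrow> nat \<Rightarrow> bit" where
  "out2 m n x2 = (let q = max m n in mat_vec q (mat_pow q (downshift q) (q - m)) x2)"

definition num_msgs :: "nat \<Rightarrow> real \<Rightarrow> nat" where
  "num_msgs N R = nat \<lfloor>2 powr (real N * R)\<rfloor>"

text \<open>W_i uniform on {..<M_i}; U_i (local randomness) uniform on L_i random bits, i.e. on {..<2^L_i};
  all independent.  At time t (t < N):
    lnk t w2 u2   : cooperative-link symbol (C bits, i.e. < 2^C) sent from Tx2 to Tx1,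
    enc2 t w2 u2  : channel input of Tx2,
    enc1 t w1 [lnk 0 w2 u2, ..., lnk (t-1) w2 u2] u1 : channel input of Tx1 (causal).\<close>
definition zic_joint ::
  "nat \<Rightarrow> nat \<Rightarrow> nat \<Rightarrow> nat \<Rightarrow> nat \<Rightarrow> nat \<Rightarrow> nat \<Rightarrow>
   (nat \<Rightarrow> nat \<Rightarrow> nat list \<Rightarrow> nat \<Rightarrow> nat \<Rightarrow> bit) \<Rightarrow>
   (nat \<Rightarrow> nat \<Rightarrow> nat \<Rightarrow> nat \<Rightarrow> bit) \<Rightarrow>
   (nat \<Rightarrow> nat \<Rightarrow> nat \<Rightarrow> nat) \<Rightarrow>
   (nat \<times> nat \<times> (nat \<Rightarrow> bit) list \<times> (nat \<Rightarrow> bit) list) pmf" where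
  "zic_joint m n N M1 M2 L1 L2 enc1 enc2 lnk =
     do { w1 \<leftarrow> pmf_of_set {..<M1};
          w2 \<leftarrow> pmf_of_set {..<M2};
          u1 \<leftarrow> pmf_of_set {..<(2::nat) ^ L1};
          u2 \<leftarrow> pmf_of_set {..<(2::nat) ^ L2};
          let x1 = (\<lambda>t. enc1 t w1 (map (\<lambda>s. lnk s w2 u2) [0..<t]) u1);
          let x2 = (\<lambda>t. enc2 t w2 u2);
          return_pmf (w1, w2,
             map (\<lambda>t. out1 m n (x1 t) (x2 t)) [0..<N],
             map (\<lambda>t. out2 m n (x2 t)) [0..<N]) }"

definition mutual_info :: "('a \<times> 'b) pmf \<Rightarrow> real" where
  "mutual_info J = (\<Sum>ab\<in>set_pmf J.
      pmf J ab * log 2 (pmf J ab / (pmf (map_pmf fst J) (fst ab) * pmf (map_pmf snd J) (snd ab))))"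

text \<open>Achievability with perfect secrecy; the codes are a sequence indexed by block length N.\<close>
definition secrecy_achievable :: "nat \<Rightarrow> nat \<Rightarrow> nat \<Rightarrow> real \<Rightarrow> real \<Rightarrow> bool" where
  "secrecy_achievable m n C R1 R2 \<longleftrightarrow> 0 \<le> R1 \<and> 0 \<le> R2 \<and>
    (\<exists>(L1 :: nat \<Rightarrow> nat) (L2 :: nat \<Rightarrow> nat)
       (enc1 :: nat \<Rightarrow> nat \<Rightarrow> nat \<Rightarrow> nat list \<Rightarrow> nat \<Rightarrow> nat \<Rightarrow> bit)
       (enc2 :: nat \<Rightarrow> nat \<Rightarrow> nat \<Rightarrow> nat \<Rightarrow> nat \<Rightarrow> bit)
       (lnk :: nat \<Rightarrow> nat \<Rightarrow> nat \<Rightarrow> nat \<Rightarrow> nat)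
       (dec1 :: nat \<Rightarrow> (nat \<Rightarrow> bit) list \<Rightarrow> nat)
       (dec2 :: nat \<Rightarrow> (nat \<Rightarrow> bit) list \<Rightarrow> nat).
      (\<forall>N t w u. lnk N t w u < 2 ^ C) \<and>
      (\<forall>N. let J = zic_joint m n N (num_msgs N R1) (num_msgs N R2) (L1 N) (L2 N)
                       (enc1 N) (enc2 N) (lnk N)
           in mutual_info (map_pmf (\<lambda>(w1, w2, y1, y2). (w1, y2)) J) = 0 \<and>
              mutual_info (map_pmf (\<lambda>(w1, w2, y1, y2). (w2, y1)) J) = 0) \<and>
      ((\<lambda>N. measure_pmf.prob
               (zic_joint m n N (num_msgs N R1) (num_msgs N R2) (L1 N) (L2 N)
                  (enc1 N) (enc2 N) (lnk N))
               {(w1, w2, y1, y2). dec1 N y1 \<noteq> w1 \<or> dec2 N y2 \<noteq> w2}) \<longlonglongrightarrow> 0))"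

definition secrecy_capacity_region :: "nat \<Rightarrow> nat \<Rightarrow> nat \<Rightarrow> (real \<times> real) set" where
  "secrecy_capacity_region m n C = closure {(R1, R2). secrecy_achievable m n C R1 R2}"

end

theory Submission
  imports Defs
begin

text \<open>For \<open>n \<ge> 2m\<close> the output of receiver 2 is a function of the output of receiver 1:
  \<open>y\<^sub>2 = D\<^sup>n\<^sup>-\<^sup>m y\<^sub>1\<close>, because the interference \<open>x\<^sub>1\<close> is shifted out entirely.
  Perfect secrecy \<open>I(W\<^sub>2; y\<^sub>1\<^sup>N) = 0\<close> therefore makes \<open>W\<^sub>2\<close> independent of receiver 2's
  observation, so receiver 2 decodes correctly with probability at most \<open>1/M\<^sub>2\<close>, and \<open>R\<^sub>2 = 0\<close>.
  Receiver 1 sees transmitter 1's input only through its top \<open>m\<close> levels, so for every value of the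
  remaining randomness at most \<open>2\<^sup>N\<^sup>m\<close> messages are decoded correctly, forcing \<open>R\<^sub>1 \<le> m\<close>.
  Conversely, uncoded transmission of \<open>m\<close> message bits per channel use with transmitter 2 silent
  achieves every \<open>R\<^sub>1 \<le> m\<close> and reveals nothing to either unintended receiver.\<close>

lemma sum_downshift_mult:
  "(\<Sum>l\<in>{1..q}. downshift q i l * v l) = (if 2 \<le> i \<and> i \<le> q then v (i - 1) else 0)"
proof -
  have "(\<Sum>l\<in>{1..q}. downshift q i l * v l)
      = (\<Sum>l\<in>{1..q}. if l = i - 1 then (if 2 \<le> i \<and> i \<le> q then v l else 0) else 0)"
    by (intro sum.cong) (auto simp: downshift_def)
  also have "\<dots> = (if 2 \<le> i \<and> i \<le> q then v (i - 1) else 0)"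
    by (simp only: sum.delta[OF finite_atLeastAtMost]) auto
  finally show ?thesis .
qed

lemma mat_vec_downshift_pow:
  "mat_vec q (mat_pow q (downshift q) k) x i = (if k < i \<and> i \<le> q then x (i - k) else 0)"
proof (induction k arbitrary: i)
  case 0
  have "mat_vec q (mat_pow q (downshift q) 0) x i
      = (\<Sum>j\<in>{1..q}. if j = i then x j else 0)"
    unfolding mat_vec_def by (intro sum.cong) (auto simp: mat_id_def)
  then show ?case by auto
next
  case (Suc k)
  have "mat_vec q (mat_pow q (downshift q) (Suc k)) x i
      = (\<Sum>j\<in>{1..q}. \<Sum>l\<in>{1..q}. downshift q i l * mat_pow q (downshift q) k l j * x j)"
    unfolding mat_vec_def mat_pow.simps mat_mult_def sum_distrib_right ..
  also have "\<dots> = (\<Sum>l\<in>{1..q}. downshift q i l * mat_vec q (mat_pow q (downshift q) k) x l)"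
    unfolding mat_vec_def sum_distrib_left mult.assoc by (rule sum.swap)
  also have "\<dots> = (if Suc k < i \<and> i \<le> q then x (i - Suc k) else 0)"
    unfolding sum_downshift_mult Suc by auto
  finally show ?case .
qed

lemma out1_eq:
  assumes "m \<le> n"
  shows "out1 m n x1 x2 = (\<lambda>i. (if n - m < i \<and> i \<le> n then x1 (i - (n - m)) else 0)
                             + (if 0 < i \<and> i \<le> n then x2 i else 0))"
proof -
  have "max m n = n" using assms by simp
  then show ?thesis unfolding out1_def Let_def mat_vec_downshift_pow by (simp only: diff_self_eq_0 diff_zero)
qed

lemma out2_eq:
  assumes "m \<le> n"
  shows "out2 m n x2 = (\<lambda>i. if n - m < i \<and> i \<le> n then x2 (i - (n - m)) else 0)"
proof -
  have "max m n = n" using assms by simp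
  then show ?thesis unfolding out2_def Let_def mat_vec_downshift_pow by (simp only:)
qed

(* D^(n-m) y1 = D^(2(n-m)) x1 + D^(n-m) x2, and D^(2(n-m)) vanishes on F_2^n once n \<ge> 2m. *)
lemma out2_out1:
  assumes "2 * m \<le> n"
  shows "out2 m n (out1 m n x1 x2) = out2 m n x2"
proof
  fix i
  have "m \<le> n" using assms by simp
  show "out2 m n (out1 m n x1 x2) i = out2 m n x2 i"
  proof (cases "n - m < i \<and> i \<le> n")
    case True
    then have "(n - m < i - (n - m) \<and> i - (n - m) \<le> n) = False"
      and "(0 < i - (n - m) \<and> i - (n - m) \<le> n) = True" and "(n - m < i \<and> i \<le> n) = True"
      using assms by auto
    then show ?thesis
      unfolding out1_eq[OF \<open>m \<le> n\<close>] out2_eq[OF \<open>m \<le> n\<close>] by (simp only: if_True if_False add_0_left)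
  next
    case False
    then show ?thesis unfolding out2_eq[OF \<open>m \<le> n\<close>] by (simp only: if_False)
  qed
qed

lemma out1_cong:
  assumes "m \<le> n" and "\<And>j. 1 \<le> j \<Longrightarrow> j \<le> m \<Longrightarrow> x1 j = x1' j"
  shows "out1 m n x1 x2 = out1 m n x1' x2"
  using assms by (auto simp: out1_eq)

lemma out1_silent_top:
  assumes "m \<le> n" "1 \<le> j" "j \<le> m"
  shows "out1 m n x1 (\<lambda>_. 0) (n - m + j) = x1 j"
proof -
  have "n - m < n - m + j \<and> n - m + j \<le> n" "n - m + j - (n - m) = j" using assms by auto
  then show ?thesis unfolding out1_eq[OF assms(1)] by (simp only: if_True if_cancel simp_thms add_0_right)
qed

lemma sum_pmf_le_1: "finite A \<Longrightarrow> (\<Sum>x\<in>A. pmf M x) \<le> 1"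
  using measure_measure_pmf_finite[of A M] measure_pmf.prob_le_1[of M A] by simp

lemma diff_le_mult_ln_div:
  fixes p q :: real
  assumes "0 < p" "0 < q"
  shows "p - q \<le> p * ln (p / q)" and "p \<noteq> q \<Longrightarrow> p - q < p * ln (p / q)"
proof -
  have eq: "p * ln (p / q) = - (p * (ln q - ln p))" using assms by (simp add: ln_div algebra_simps)
  have "p * (ln q - ln p) \<le> p * ((q - p) / p)"
    using ln_diff_le[of q p] assms by (intro mult_left_mono) auto
  then show "p - q \<le> p * ln (p / q)" unfolding eq using assms by simp
  assume "p \<noteq> q"
  then have "p * (ln q - ln p) < p * ((q - p) / p)"
    using ln_diff_less[of q p] assms by (intro mult_strict_left_mono) auto
  then show "p - q < p * ln (p / q)" unfolding eq using assms by simp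
qed

lemma mutual_info_eq_0_imp_indep:
  fixes J :: "('a \<times> 'b) pmf"
  assumes fin: "finite (set_pmf J)" and mi: "mutual_info J = 0" and x: "x \<in> set_pmf J"
  shows "pmf J x = pmf (map_pmf fst J) (fst x) * pmf (map_pmf snd J) (snd x)"
proof (rule ccontr)
  define S where "S = set_pmf J"
  define p where "p = pmf J"
  define q where "q = (\<lambda>y. pmf (map_pmf fst J) (fst y) * pmf (map_pmf snd J) (snd y))"
  assume "\<not> ?thesis"
  then have ne: "p x \<noteq> q x" by (simp add: p_def q_def)
  have pos: "0 < p y" "0 < q y" if "y \<in> S" for y
    using that by (auto simp: S_def p_def q_def pmf_positive)
  have "(\<Sum>y\<in>S. q y) \<le> (\<Sum>y\<in>fst ` S \<times> snd ` S. q y)"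
    by (rule sum_mono2) (use fin in \<open>auto simp: S_def q_def intro: rev_image_eqI\<close>)
  also have "\<dots> = (\<Sum>a\<in>fst ` S. pmf (map_pmf fst J) a) * (\<Sum>b\<in>snd ` S. pmf (map_pmf snd J) b)"
    unfolding q_def by (simp add: sum_product sum.cartesian_product case_prod_beta)
  also have "\<dots> \<le> 1"
    by (intro mult_le_one sum_pmf_le_1 sum_nonneg) (use fin in \<open>auto simp: S_def\<close>)
  finally have "0 \<le> (\<Sum>y\<in>S. p y - q y)"
    using sum_pmf_eq_1[of S J] fin by (simp add: S_def p_def sum_subtractf)
  also have "\<dots> < (\<Sum>y\<in>S. p y * ln (p y / q y))"
  proof (rule sum_strict_mono_ex1)
    show "\<forall>y\<in>S. p y - q y \<le> p y * ln (p y / q y)" using pos diff_le_mult_ln_div(1) by blast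
    show "\<exists>y\<in>S. p y - q y < p y * ln (p y / q y)"
      using x ne pos diff_le_mult_ln_div(2) unfolding S_def by blast
  qed (use fin in \<open>simp add: S_def\<close>)
  also have "\<dots> = mutual_info J * ln 2"
    unfolding mutual_info_def S_def p_def q_def log_def by (simp add: sum_distrib_right)
  finally show False using mi by simp
qed

lemma mutual_info_eq_0_if_indep:
  assumes "\<And>x. x \<in> set_pmf J \<Longrightarrow> pmf J x = pmf (map_pmf fst J) (fst x) * pmf (map_pmf snd J) (snd x)"
  shows "mutual_info J = 0"
  unfolding mutual_info_def
proof (intro sum.neutral ballI)
  fix x assume "x \<in> set_pmf J"
  with assms[of x] show "pmf J x * log 2 (pmf J x / (pmf (map_pmf fst J) (fst x) * pmf (map_pmf snd J) (snd x))) = 0"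
    by (simp add: set_pmf_iff)
qed

lemma mutual_info_eq_0_if_snd_const:
  assumes "\<And>x. x \<in> set_pmf K \<Longrightarrow> snd x = c"
  shows "mutual_info K = 0"
proof (rule mutual_info_eq_0_if_indep)
  fix x assume x: "x \<in> set_pmf K"
  have "map_pmf snd K = return_pmf c"
    using assms by (simp add: map_pmf_eq_return_pmf_iff)
  moreover have "fst -` {fst x} \<inter> set_pmf K = {x} \<inter> set_pmf K"
  proof (intro equalityI subsetI)
    fix y assume "y \<in> fst -` {fst x} \<inter> set_pmf K"
    with assms[of y] assms[OF x] show "y \<in> {x} \<inter> set_pmf K" by (auto simp: prod_eq_iff)
  qed (use x in auto)
  then have "pmf (map_pmf fst K) (fst x) = pmf K x"
    by (metis pmf_map measure_Int_set_pmf measure_pmf_single)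
  ultimately show "pmf K x = pmf (map_pmf fst K) (fst x) * pmf (map_pmf snd K) (snd x)"
    using assms x by simp
qed

lemma mutual_info_eq_0_if_fst_const:
  assumes "\<And>x. x \<in> set_pmf K \<Longrightarrow> fst x = c"
  shows "mutual_info K = 0"
proof (rule mutual_info_eq_0_if_indep)
  fix x assume x: "x \<in> set_pmf K"
  have "map_pmf fst K = return_pmf c"
    using assms by (simp add: map_pmf_eq_return_pmf_iff)
  moreover have "snd -` {snd x} \<inter> set_pmf K = {x} \<inter> set_pmf K"
  proof (intro equalityI subsetI)
    fix y assume "y \<in> snd -` {snd x} \<inter> set_pmf K"
    with assms[of y] assms[OF x] show "y \<in> {x} \<inter> set_pmf K" by (auto simp: prod_eq_iff)
  qed (use x in auto)
  then have "pmf (map_pmf snd K) (snd x) = pmf K x"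
    by (metis pmf_map measure_Int_set_pmf measure_pmf_single)
  ultimately show "pmf K x = pmf (map_pmf fst K) (fst x) * pmf (map_pmf snd K) (snd x)"
    using assms x by simp
qed

lemma mutual_info_eq_0_guess_prob_le:
  fixes K :: "('a \<times> 'b) pmf" and g :: "'b \<Rightarrow> 'a"
  assumes fin: "finite (set_pmf K)" and mi: "mutual_info K = 0"
    and bound: "\<And>a. pmf (map_pmf fst K) a \<le> c"
  shows "measure_pmf.prob K {(a, b). g b = a} \<le> c"
proof -
  define F where "F = {(a, b). g b = a} \<inter> set_pmf K"
  have "0 \<le> c" by (rule order_trans[OF pmf_nonneg bound])
  have "measure_pmf.prob K {(a, b). g b = a} = measure_pmf.prob K F"
    unfolding F_def by (rule measure_Int_set_pmf[symmetric])
  also have "\<dots> = (\<Sum>x\<in>F. pmf K x)"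
    using fin by (intro measure_measure_pmf_finite) (simp add: F_def)
  also have "\<dots> = (\<Sum>x\<in>F. pmf (map_pmf fst K) (fst x) * pmf (map_pmf snd K) (snd x))"
    by (intro sum.cong refl mutual_info_eq_0_imp_indep[OF fin mi]) (auto simp: F_def)
  also have "\<dots> \<le> (\<Sum>x\<in>F. c * pmf (map_pmf snd K) (snd x))"
    by (intro sum_mono mult_right_mono bound) simp
  also have "\<dots> = c * (\<Sum>b\<in>snd ` F. pmf (map_pmf snd K) b)"
  proof -
    have "inj_on snd F" by (rule inj_onI) (auto simp: F_def)
    then show ?thesis by (simp add: sum.reindex sum_distrib_left)
  qed
  also have "\<dots> \<le> c"
    using sum_pmf_le_1[of "snd ` F" "map_pmf snd K"] fin \<open>0 \<le> c\<close>
    by (intro mult_left_le) (simp_all add: F_def)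
  finally show ?thesis .
qed

lemma prob_ge_1_minus_prob_compl:
  "- A \<subseteq> B \<Longrightarrow> 1 - measure_pmf.prob M A \<le> measure_pmf.prob M B"
  using measure_pmf.prob_compl[of A M] measure_pmf.finite_measure_mono[of "- A" B M]
  by (simp add: Compl_eq_Diff_UNIV)

lemma UNIV_bit: "(UNIV :: bit set) = {0, 1}"
  by (auto intro: bit.exhaust)

lemma card_bit_lists_lists:
  "card {xss. set xss \<subseteq> {xs :: bit list. set xs \<subseteq> UNIV \<and> length xs = m} \<and> length xss = N} = 2 ^ (N * m)"
  by (simp add: card_lists_length_eq finite_lists_length_eq UNIV_bit)
    (metis power_mult mult.commute numeral_2_eq_2)

lemma card_decoded_le:
  fixes Y :: "'w \<Rightarrow> 'r \<Rightarrow> 'y" and Z :: "'w \<Rightarrow> 'r \<Rightarrow> 'z" and dec :: "'y \<Rightarrow> 'w"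
  assumes "finite R" "finite Zs"
    and Z: "\<And>w r. w \<in> W \<Longrightarrow> r \<in> R \<Longrightarrow> Z w r \<in> Zs"
    and Y: "\<And>w w' r. r \<in> R \<Longrightarrow> Z w r = Z w' r \<Longrightarrow> Y w r = Y w' r"
  shows "card {(w, r). w \<in> W \<and> r \<in> R \<and> dec (Y w r) = w} \<le> card R * card Zs"
proof -
  let ?T = "{(w, r). w \<in> W \<and> r \<in> R \<and> dec (Y w r) = w}"
  have "inj_on (\<lambda>(w, r). (r, Z w r)) ?T"
  proof (rule inj_onI, clarsimp)
    fix w w' r assume "r \<in> R" "dec (Y w r) = w" "dec (Y w' r) = w'" "Z w r = Z w' r"
    then show "w = w'" using Y by metis
  qed
  moreover have "(\<lambda>(w, r). (r, Z w r)) ` ?T \<subseteq> R \<times> Zs" using Z by auto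
  ultimately have "card ?T \<le> card (R \<times> Zs)"
    using assms(1,2) by (intro card_inj_on_le) auto
  then show ?thesis by (simp add: card_cartesian_product)
qed

lemma pmf_of_set_Times:
  assumes "finite A" "A \<noteq> {}" "finite B" "B \<noteq> {}"
  shows "pmf_of_set (A \<times> B) = pair_pmf (pmf_of_set A) (pmf_of_set B)"
proof (rule pmf_eqI)
  fix x :: "'a \<times> 'b"
  show "pmf (pmf_of_set (A \<times> B)) x = pmf (pair_pmf (pmf_of_set A) (pmf_of_set B)) x"
    by (cases x) (use assms in \<open>simp add: pmf_pair card_cartesian_product indicator_def\<close>)
qed

definition zic_outcome ::
  "nat \<Rightarrow> nat \<Rightarrow> nat \<Rightarrow> (nat \<Rightarrow> nat \<Rightarrow> nat list \<Rightarrow> nat \<Rightarrow> nat \<Rightarrow> bit) \<Rightarrow>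
   (nat \<Rightarrow> nat \<Rightarrow> nat \<Rightarrow> nat \<Rightarrow> bit) \<Rightarrow> (nat \<Rightarrow> nat \<Rightarrow> nat \<Rightarrow> nat) \<Rightarrow>
   nat \<times> nat \<times> nat \<times> nat \<Rightarrow> nat \<times> nat \<times> (nat \<Rightarrow> bit) list \<times> (nat \<Rightarrow> bit) list" where
  "zic_outcome m n N enc1 enc2 lnk = (\<lambda>(w1, w2, u1, u2). (w1, w2,
     map (\<lambda>t. out1 m n (enc1 t w1 (map (\<lambda>s. lnk s w2 u2) [0..<t]) u1) (enc2 t w2 u2)) [0..<N],
     map (\<lambda>t. out2 m n (enc2 t w2 u2)) [0..<N]))"

lemma zic_output1_cong:
  assumes "m \<le> n"
    and "\<And>t j. t < N \<Longrightarrow> 1 \<le> j \<Longrightarrow> j \<le> m \<Longrightarrow>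
           enc1 t w1 (map (\<lambda>s. lnk s w2 u2) [0..<t]) u1 j = enc1 t w1' (map (\<lambda>s. lnk s w2 u2) [0..<t]) u1 j"
  shows "fst (snd (snd (zic_outcome m n N enc1 enc2 lnk (w1, w2, u1, u2))))
       = fst (snd (snd (zic_outcome m n N enc1 enc2 lnk (w1', w2, u1, u2))))"
  using assms by (auto simp: zic_outcome_def intro: out1_cong)

lemma zic_joint_eq_map_pmf:
  assumes "0 < M1" "0 < M2"
  shows "zic_joint m n N M1 M2 L1 L2 enc1 enc2 lnk =
    map_pmf (zic_outcome m n N enc1 enc2 lnk)
      (pmf_of_set ({..<M1} \<times> {..<M2} \<times> {..<(2::nat) ^ L1} \<times> {..<(2::nat) ^ L2}))"
  using assms
  by (simp add: zic_joint_def zic_outcome_def pmf_of_set_Times lessThan_empty_iff pair_pmf_def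
      map_bind_pmf bind_assoc_pmf bind_return_pmf Let_def)

lemma set_pmf_zic_joint:
  assumes "0 < M1" "0 < M2"
  shows "set_pmf (zic_joint m n N M1 M2 L1 L2 enc1 enc2 lnk) =
    zic_outcome m n N enc1 enc2 lnk ` ({..<M1} \<times> {..<M2} \<times> {..<(2::nat) ^ L1} \<times> {..<(2::nat) ^ L2})"
  using assms by (simp add: zic_joint_eq_map_pmf lessThan_empty_iff)

lemma map_pmf_msg2_zic_joint:
  "map_pmf (fst \<circ> snd) (zic_joint m n N M1 M2 L1 L2 enc1 enc2 lnk) = pmf_of_set {..<M2}"
  by (simp add: zic_joint_def map_bind_pmf bind_pmf_const bind_return_pmf' Let_def)

lemma prob_decode1_correct_le:
  assumes "m \<le> n" "0 < M1" "0 < M2"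
  shows "measure_pmf.prob (zic_joint m n N M1 M2 L1 L2 enc1 enc2 lnk) {(w1, w2, y1, y2). dec1 y1 = w1}
           \<le> 2 ^ (N * m) / M1"
proof -
  define R where "R = {..<M2} \<times> {..<(2::nat) ^ L1} \<times> {..<(2::nat) ^ L2}"
  define Y where "Y = (\<lambda>w1 r. fst (snd (snd (zic_outcome m n N enc1 enc2 lnk (w1, r)))))"
  \<comment> \<open>The top \<open>m\<close> levels of transmitter 1's inputs, all that receiver 1 sees of them.\<close>
  define Z where "Z = (\<lambda>w1 (w2, u1, u2).
    map (\<lambda>t. map (\<lambda>j. enc1 t w1 (map (\<lambda>s. lnk s w2 u2) [0..<t]) u1 (Suc j)) [0..<m]) [0..<N])"
  define Zs where "Zs = {xss. set xss \<subseteq> {xs :: bit list. set xs \<subseteq> UNIV \<and> length xs = m} \<and> length xss = N}"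
  have R: "finite R" "R \<noteq> {}" using assms by (auto simp: R_def lessThan_empty_iff)
  have "card {(w1, r). w1 \<in> {..<M1} \<and> r \<in> R \<and> dec1 (Y w1 r) = w1} \<le> card R * card Zs"
  proof (rule card_decoded_le[where Y = Y and Z = Z])
    show "finite Zs" unfolding Zs_def by (intro finite_lists_length_eq) (simp_all add: UNIV_bit)
    show "Z w1 r \<in> Zs" for w1 r by (auto simp: Z_def Zs_def split: prod.split)
    show "Y w1 r = Y w1' r" if "Z w1 r = Z w1' r" for w1 w1' r
    proof -
      obtain w2 u1 u2 where r: "r = (w2, u1, u2)" by (cases r)
      show ?thesis unfolding Y_def r
      proof (rule zic_output1_cong[OF assms(1)])
        fix t j assume "t < N" "1 \<le> j" "j \<le> m"
        have "Z w1 r ! t ! (j - 1) = Z w1' r ! t ! (j - 1)" using \<open>Z w1 r = Z w1' r\<close> by simp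
        moreover have "j - 1 < m" "Suc (j - 1) = j" using \<open>1 \<le> j\<close> \<open>j \<le> m\<close> by auto
        ultimately show "enc1 t w1 (map (\<lambda>s. lnk s w2 u2) [0..<t]) u1 j
            = enc1 t w1' (map (\<lambda>s. lnk s w2 u2) [0..<t]) u1 j"
          using \<open>t < N\<close> by (simp add: Z_def r)
      qed
    qed
  qed (use R in auto)
  moreover have "card Zs = 2 ^ (N * m)" unfolding Zs_def by (rule card_bit_lists_lists)
  moreover have "{..<M1} \<times> R \<inter> zic_outcome m n N enc1 enc2 lnk -` {(w1, w2, y1, y2). dec1 y1 = w1}
      = {(w1, r). w1 \<in> {..<M1} \<and> r \<in> R \<and> dec1 (Y w1 r) = w1}"
    by (auto simp: Y_def zic_outcome_def)
  ultimately have "measure_pmf.prob (zic_joint m n N M1 M2 L1 L2 enc1 enc2 lnk) {(w1, w2, y1, y2). dec1 y1 = w1}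
      \<le> real (card R * 2 ^ (N * m)) / real (card ({..<M1} \<times> R))"
    using assms R by (simp add: zic_joint_eq_map_pmf R_def[symmetric] measure_pmf_of_set
        lessThan_empty_iff divide_right_mono del: of_nat_mult)
  also have "\<dots> = 2 ^ (N * m) / M1"
    using R by (simp add: card_cartesian_product)
  finally show ?thesis .
qed

lemma prob_decode2_correct_le:
  assumes "2 * m \<le> n" "0 < M1" "0 < M2"
    and "mutual_info (map_pmf (\<lambda>(w1, w2, y1, y2). (w2, y1)) (zic_joint m n N M1 M2 L1 L2 enc1 enc2 lnk)) = 0"
  shows "measure_pmf.prob (zic_joint m n N M1 M2 L1 L2 enc1 enc2 lnk) {(w1, w2, y1, y2). dec2 y2 = w2}
           \<le> 1 / M2"
proof -
  define J where "J = zic_joint m n N M1 M2 L1 L2 enc1 enc2 lnk"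
  define K where "K = map_pmf (\<lambda>(w1, w2, y1, y2). (w2, y1)) J"
  have "finite (set_pmf J)" unfolding J_def using assms by (simp add: set_pmf_zic_joint)
  then have finK: "finite (set_pmf K)" by (simp add: K_def)
  have "y2 = map (out2 m n) y1" if "(w1, w2, y1, y2) \<in> set_pmf J" for w1 w2 y1 y2
    using that assms unfolding J_def
    by (auto simp: set_pmf_zic_joint zic_outcome_def out2_out1)
  then have "measure_pmf.prob J {(w1, w2, y1, y2). dec2 y2 = w2}
      = measure_pmf.prob J ((\<lambda>(w1, w2, y1, y2). (w2, y1)) -` {(w2, y1). dec2 (map (out2 m n) y1) = w2})"
    by (intro measure_eq_AE AE_pmfI) auto
  also have "\<dots> = measure_pmf.prob K {(w2, y1). dec2 (map (out2 m n) y1) = w2}"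
    by (simp add: K_def)
  also have "\<dots> \<le> 1 / M2"
  proof (rule mutual_info_eq_0_guess_prob_le[OF finK])
    show "mutual_info K = 0" using assms(4) by (simp add: K_def J_def)
    have proj: "fst \<circ> (\<lambda>(w1, w2, y1, y2). (w2, y1)) = fst \<circ> snd" by auto
    have "map_pmf fst K = pmf_of_set {..<M2}"
      unfolding K_def J_def pmf.map_comp proj by (rule map_pmf_msg2_zic_joint)
    then show "pmf (map_pmf fst K) w2 \<le> 1 / M2" for w2
      using assms(3) by (simp add: pmf_of_set indicator_def lessThan_empty_iff)
  qed
  finally show ?thesis by (simp add: J_def)
qed

lemma num_msgs_pos: "0 \<le> R \<Longrightarrow> 0 < num_msgs N R"
  unfolding num_msgs_def using ge_one_powr_ge_zero[of 2 "real N * R"] by fastforce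

lemma num_msgs_zero: "num_msgs N 0 = 1"
  by (simp add: num_msgs_def)

lemma num_msgs_le:
  assumes "0 \<le> R" "R \<le> real m"
  shows "num_msgs N R \<le> 2 ^ (N * m)"
proof -
  have "2 powr (real N * R) \<le> 2 powr (real N * real m)"
    using assms by (intro powr_mono mult_left_mono) auto
  also have "\<dots> = real (2 ^ (N * m))" by (simp add: powr_realpow[symmetric])
  finally show ?thesis unfolding num_msgs_def by linarith
qed

lemma eventually_num_msgs_ge:
  assumes "real r < R"
  shows "eventually (\<lambda>N. 2 * 2 ^ (N * r) \<le> real (num_msgs N R)) sequentially"
  using eventually_ge_at_top[of "nat \<lceil>2 / (R - r)\<rceil>"]
proof eventually_elim
  case (elim N)
  then have "2 \<le> real N * (R - r)" using assms by (simp add: field_simps)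
  then have "4 \<le> 2 powr (real N * (R - r))"
    using powr_mono[of 2 "real N * (R - r)" 2] by simp
  then have "2 ^ (N * r) * 4 \<le> 2 ^ (N * r) * 2 powr (real N * (R - r))"
    by (intro mult_left_mono) auto
  also have "\<dots> = 2 powr (real N * R)"
    by (simp add: powr_realpow[symmetric] powr_add[symmetric] algebra_simps)
  finally have "2 * 2 ^ (N * r) + 1 \<le> 2 powr (real N * R)"
    using one_le_power[of "2::real" "N * r"] by linarith
  then show ?case unfolding num_msgs_def by linarith
qed

lemma rate_le_if_success_prob_le:
  fixes P :: "nat \<Rightarrow> real"
  assumes "P \<longlonglongrightarrow> 0" and "\<And>N. 1 - 2 ^ (N * r) / num_msgs N R \<le> P N"
  shows "R \<le> real r"
proof (rule ccontr)
  assume "\<not> R \<le> real r"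
  then have "eventually (\<lambda>N. 2 * 2 ^ (N * r) \<le> real (num_msgs N R) \<and> P N < 1 / 2) sequentially"
    using eventually_num_msgs_ge order_tendstoD(2)[OF assms(1), of "1 / 2"] by (simp add: eventually_conj)
  then obtain N where M: "2 * 2 ^ (N * r) \<le> real (num_msgs N R)" and "P N < 1 / 2"
    by (auto simp: eventually_sequentially)
  moreover have "1 / 2 \<le> 1 - 2 ^ (N * r) / real (num_msgs N R)"
  proof -
    have "0 < real (num_msgs N R)" using M by (smt (verit) zero_less_power)
    with M show ?thesis by (simp add: field_simps)
  qed
  ultimately show False using assms(2)[of N] by linarith
qed

definition uncoded_input :: "nat \<Rightarrow> nat \<Rightarrow> nat \<Rightarrow> nat \<Rightarrow> bit" where
  "uncoded_input m t w j = (if 1 \<le> j \<and> j \<le> m \<and> bit w (t * m + (j - 1)) then 1 else 0)"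

definition uncoded_output :: "nat \<Rightarrow> nat \<Rightarrow> nat \<Rightarrow> nat \<Rightarrow> (nat \<Rightarrow> bit) list" where
  "uncoded_output m n N w = map (\<lambda>t. out1 m n (uncoded_input m t w) (\<lambda>_. 0)) [0..<N]"

lemma inj_on_uncoded_output:
  assumes "m \<le> n"
  shows "inj_on (uncoded_output m n N) {..<2 ^ (N * m)}"
proof (rule inj_onI)
  fix w w' assume w: "w \<in> {..<2 ^ (N * m)}" and w': "w' \<in> {..<2 ^ (N * m)}"
    and eq: "uncoded_output m n N w = uncoded_output m n N w'"
  have "bit w k = bit w' k" for k
  proof (cases "k < N * m")
    case True
    define t j where "t = k div m" and "j = k mod m + 1"
    have "0 < m" using True by (cases m) auto
    then have t: "t < N" and j: "1 \<le> j" "j \<le> m" and k: "t * m + (j - 1) = k"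
      using True by (simp_all add: t_def j_def div_less_iff_less_mult mult.commute Suc_le_eq)
    have out: "uncoded_output m n N v ! t = out1 m n (uncoded_input m t v) (\<lambda>_. 0)" for v
      using t by (simp add: uncoded_output_def)
    have "uncoded_input m t w j = (uncoded_output m n N w ! t) (n - m + j)"
      unfolding out out1_silent_top[OF assms j] ..
    also have "\<dots> = (uncoded_output m n N w' ! t) (n - m + j)" unfolding eq ..
    also have "\<dots> = uncoded_input m t w' j"
      unfolding out out1_silent_top[OF assms j] ..
    finally show ?thesis using j unfolding k[symmetric] uncoded_input_def
      by (auto split: if_splits)
  next
    case False
    then have "(2::nat) ^ (N * m) \<le> 2 ^ k" by (intro power_increasing) auto
    then have "w < 2 ^ k" "w' < 2 ^ k" using w w' by (auto intro: order_less_le_trans)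
    then show ?thesis by (simp add: bit_iff_odd div_less)
  qed
  then show "w = w'" by (simp add: bit_eq_iff)
qed

lemma secrecy_achievable_uncoded:
  assumes "m \<le> n" "0 \<le> R1" "R1 \<le> real m"
  shows "secrecy_achievable m n C R1 0"
proof -
  define enc1 :: "nat \<Rightarrow> nat \<Rightarrow> nat \<Rightarrow> nat list \<Rightarrow> nat \<Rightarrow> nat \<Rightarrow> bit"
    where "enc1 = (\<lambda>N t w1 ls u1. uncoded_input m t w1)"
  define enc2 :: "nat \<Rightarrow> nat \<Rightarrow> nat \<Rightarrow> nat \<Rightarrow> nat \<Rightarrow> bit" where "enc2 = (\<lambda>N t w2 u2 j. 0)"
  define lnk :: "nat \<Rightarrow> nat \<Rightarrow> nat \<Rightarrow> nat \<Rightarrow> nat" where "lnk = (\<lambda>N t w2 u2. 0)"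
  define dec1 :: "nat \<Rightarrow> (nat \<Rightarrow> bit) list \<Rightarrow> nat"
    where "dec1 = (\<lambda>N. inv_into {..<2 ^ (N * m)} (uncoded_output m n N))"
  define dec2 :: "nat \<Rightarrow> (nat \<Rightarrow> bit) list \<Rightarrow> nat" where "dec2 = (\<lambda>N y2. 0)"
  define L :: "nat \<Rightarrow> nat" where "L = (\<lambda>N. 0)"
  define J where "J = (\<lambda>N. zic_joint m n N (num_msgs N R1) (num_msgs N 0) (L N) (L N)
                             (enc1 N) (enc2 N) (lnk N))"
  have J: "set_pmf (J N) = (\<lambda>w1. (w1, 0, uncoded_output m n N w1, map (\<lambda>t. out2 m n (\<lambda>_. 0)) [0..<N]))
      ` {..<num_msgs N R1}" for N
    using num_msgs_pos[OF assms(2)]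
    by (auto simp: J_def set_pmf_zic_joint num_msgs_zero L_def enc1_def enc2_def zic_outcome_def
        uncoded_output_def lessThan_Suc image_iff)
  have secret: "mutual_info (map_pmf (\<lambda>(w1, w2, y1, y2). (w1, y2)) (J N)) = 0 \<and>
      mutual_info (map_pmf (\<lambda>(w1, w2, y1, y2). (w2, y1)) (J N)) = 0" for N
    by (intro conjI mutual_info_eq_0_if_snd_const mutual_info_eq_0_if_fst_const) (auto simp: J)
  have "dec1 N (uncoded_output m n N w1) = w1" if "w1 < num_msgs N R1" for N w1
    using that num_msgs_le[OF assms(2,3), of N] inj_on_uncoded_output[OF assms(1)]
    by (auto simp: dec1_def intro: inv_into_f_f)
  then have correct: "measure_pmf.prob (J N) {(w1, w2, y1, y2). dec1 N y1 \<noteq> w1 \<or> dec2 N y2 \<noteq> w2} = 0"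
    for N by (auto simp: measure_pmf_zero_iff J dec2_def)
  show ?thesis
    unfolding secrecy_achievable_def
    apply (intro conjI assms(2) order_refl)
    apply (rule exI[of _ L], rule exI[of _ L], rule exI[of _ enc1], rule exI[of _ enc2], rule exI[of _ lnk],
        rule exI[of _ dec1], rule exI[of _ dec2])
    using secret correct by (simp add: J_def lnk_def)
qed

lemma secrecy_achievable_iff:
  assumes "2 * m \<le> n"
  shows "secrecy_achievable m n C R1 R2 \<longleftrightarrow> 0 \<le> R1 \<and> R1 \<le> real m \<and> R2 = 0"
proof
  assume "0 \<le> R1 \<and> R1 \<le> real m \<and> R2 = 0"
  then show "secrecy_achievable m n C R1 R2"
    using secrecy_achievable_uncoded[of m n R1 C] assms by simp
next
  assume "secrecy_achievable m n C R1 R2"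
  then obtain L1 L2 enc1 enc2 lnk dec1 dec2 where
    R: "0 \<le> R1" "0 \<le> R2" and
    secret: "\<And>N. mutual_info (map_pmf (\<lambda>(w1, w2, y1, y2). (w2, y1))
       (zic_joint m n N (num_msgs N R1) (num_msgs N R2) (L1 N) (L2 N) (enc1 N) (enc2 N) (lnk N))) = 0" and
    error: "(\<lambda>N. measure_pmf.prob
       (zic_joint m n N (num_msgs N R1) (num_msgs N R2) (L1 N) (L2 N) (enc1 N) (enc2 N) (lnk N))
       {(w1, w2, y1, y2). dec1 N y1 \<noteq> w1 \<or> dec2 N y2 \<noteq> w2}) \<longlonglongrightarrow> 0"
    unfolding secrecy_achievable_def Let_def by blast
  define J where "J N = zic_joint m n N (num_msgs N R1) (num_msgs N R2) (L1 N) (L2 N) (enc1 N) (enc2 N) (lnk N)"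
    for N
  define P where "P N = measure_pmf.prob (J N) {(w1, w2, y1, y2). dec1 N y1 \<noteq> w1 \<or> dec2 N y2 \<noteq> w2}" for N
  have M: "0 < num_msgs N R1" "0 < num_msgs N R2" for N using R by (simp_all add: num_msgs_pos)
  have lim: "P \<longlonglongrightarrow> 0" using error unfolding P_def J_def .
  have bound1: "1 - 2 ^ (N * m) / real (num_msgs N R1) \<le> P N" for N
  proof -
    have "measure_pmf.prob (J N) {(w1, w2, y1, y2). dec1 N y1 = w1} \<le> 2 ^ (N * m) / num_msgs N R1"
      unfolding J_def using assms by (intro prob_decode1_correct_le M) simp
    moreover have "1 - measure_pmf.prob (J N) {(w1, w2, y1, y2). dec1 N y1 = w1} \<le> P N"
      unfolding P_def by (rule prob_ge_1_minus_prob_compl) auto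
    ultimately show ?thesis by linarith
  qed
  have bound2: "1 - 2 ^ (N * 0) / real (num_msgs N R2) \<le> P N" for N
  proof -
    have "measure_pmf.prob (J N) {(w1, w2, y1, y2). dec2 N y2 = w2} \<le> 1 / num_msgs N R2"
      unfolding J_def using assms secret by (intro prob_decode2_correct_le M)
    moreover have "1 - measure_pmf.prob (J N) {(w1, w2, y1, y2). dec2 N y2 = w2} \<le> P N"
      unfolding P_def by (rule prob_ge_1_minus_prob_compl) auto
    ultimately show ?thesis by simp
  qed
  have "R1 \<le> real m" by (rule rate_le_if_success_prob_le[OF lim bound1])
  moreover have "R2 \<le> real 0" by (rule rate_le_if_success_prob_le[OF lim bound2])
  ultimately show "0 \<le> R1 \<and> R1 \<le> real m \<and> R2 = 0" using R by simp
qed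

theorem theorem3:
  fixes m n C :: nat
  assumes "m \<ge> 1"
    and "real n / real m \<ge> 2"
  shows "secrecy_capacity_region m n C = {(R1, R2). 0 \<le> R1 \<and> R1 \<le> real m \<and> R2 = 0}"
proof -
  have "2 * m \<le> n" using assms by (simp add: field_simps)
  then have achievable: "{(R1, R2). secrecy_achievable m n C R1 R2} = {0..real m} \<times> {0}"
    by (auto simp: secrecy_achievable_iff)
  have closed: "closed ({0..real m} \<times> {0::real})" by (intro closed_Times) auto
  show ?thesis unfolding secrecy_capacity_region_def achievable closure_closed[OF closed] by auto
qed

end
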